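(* Let $(\Omega,\mathcal F,\mu)$ be a finite measure space, $p\in[1,\infty)$, $k\ge1$, and $f\in L^p(\Omega,\mathcal F,\mu)$ with continuous cumulative distribution function $F_f$. Then every minimizer $g\in\mathscr G_{p,k}$ of $\|f-g\|_p$ satisfies, $\mu$-a.e., $g=\sum_{i=1}^k a_i\mathbf 1_{f^{-1}([r_i,r_{i+1}))}$ where $a_1<\dots<a_k$, $\mathfrak a_f=r_1<r_2<\dots<r_k<r_{k+1}=\mathfrak b_f$, $r_i=\frac{a_{i-1}+a_i}{2}$ for $2\le i\le k$, each $[r_i,r_{i+1})$ has positive $\mu_f$-measure, and each $a_i$ is a $p$-th mean of the identity function on $[r_i,r_{i+1})$ with respect to $\mu_f$. If moreover $F_f$ is strictly increasing on $[\mathfrak a_f,\mathfrak b_f]$, then $a_i=\mathcal M_p(\mathrm{id},[r_i,r_{i+1}),\mu_f)$ for all $i$.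
   Context: $\mathscr G_{p,k}$ is the set of functions $\sum_{i=1}^l a_i\mathbf 1_{A_i}\in L^p$ with $l\le k$, $\{A_i\}$ a measurable partition of $\Omega$, $a_i\in\mathbb R$. $\mu_f=\mu\circ f^{-1}$, $F_f(x)=\mu_f((-\infty,x])$, $\mathfrak a_f=\sup\{z:F_f(z)=0\}$, $\mathfrak b_f=\inf\{z:F_f(z)=\mu(\Omega)\}$. A $p$-th mean of a function $h$ on a set $A$ of positive finite measure (for a measure $\nu$) is any minimizer over $a\in\mathbb R$ of $\int_A|h-a|^p\,d\nu$; for $p>1$ it is unique, denoted $\mathcal M_p(h,A,\nu)$; for $p=1$ the minimizers form a closed bounded interval $[a^*,b^*]$ and $\mathcal M_1(h,A,\nu)=(a^*+b^* )/2$. *)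

theory Defs
  imports "HOL-Analysis.Analysis"
begin

definition memLp :: "'a measure \<Rightarrow> real \<Rightarrow> ('a \<Rightarrow> real) \<Rightarrow> bool" where
  "memLp M p f \<longleftrightarrow> f \<in> borel_measurable M \<and> integrable M (\<lambda>x. \<bar>f x\<bar> powr p)"

definition Lp_norm :: "'a measure \<Rightarrow> real \<Rightarrow> ('a \<Rightarrow> real) \<Rightarrow> real" where
  "Lp_norm M p f = (\<integral>x. \<bar>f x\<bar> powr p \<partial>M) powr (1 / p)"

definition Gpk :: "'a measure \<Rightarrow> real \<Rightarrow> nat \<Rightarrow> ('a \<Rightarrow> real) set" where
  "Gpk M p k = {g. \<exists>l (a::nat \<Rightarrow> real) (A::nat \<Rightarrow> 'a set).
      l \<le> k \<and> (\<forall>i<l. A i \<in> sets M) \<and> disjoint_family_on A {..<l}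
      \<and> (\<Union>i<l. A i) = space M
      \<and> (\<forall>x\<in>space M. g x = (\<Sum>i<l. a i * indicator (A i) x))
      \<and> memLp M p g}"

definition push :: "'a measure \<Rightarrow> ('a \<Rightarrow> real) \<Rightarrow> real measure" where
  "push M f = distr M borel f"

definition cdf_of :: "'a measure \<Rightarrow> ('a \<Rightarrow> real) \<Rightarrow> real \<Rightarrow> real" where
  "cdf_of M f x = measure (push M f) {..x}"

text \<open>Essential lower/upper endpoints (extended reals: Sup {} = -\<infinity>, Inf {} = \<infinity>).\<close>
definition afrak :: "'a measure \<Rightarrow> ('a \<Rightarrow> real) \<Rightarrow> ereal" where
  "afrak M f = Sup (ereal ` {z. cdf_of M f z = 0})"

definition bfrak :: "'a measure \<Rightarrow> ('a \<Rightarrow> real) \<Rightarrow> ereal" where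
  "bfrak M f = Inf (ereal ` {z. cdf_of M f z = measure M (space M)})"

definition is_pth_mean :: "real \<Rightarrow> (real \<Rightarrow> real) \<Rightarrow> real set \<Rightarrow> real measure \<Rightarrow> real \<Rightarrow> bool" where
  "is_pth_mean p h A \<nu> a \<longleftrightarrow>
     (\<forall>b. (\<integral>\<^sup>+x. ennreal (\<bar>h x - a\<bar> powr p) * indicator A x \<partial>\<nu>)
          \<le> (\<integral>\<^sup>+x. ennreal (\<bar>h x - b\<bar> powr p) * indicator A x \<partial>\<nu>))"

text \<open>M_p: the unique p-th mean for p > 1; midpoint of the interval of minimisers for p = 1.\<close>
definition Mp :: "real \<Rightarrow> (real \<Rightarrow> real) \<Rightarrow> real set \<Rightarrow> real measure \<Rightarrow> real" where
  "Mp p h A \<nu> = (if p > 1 then (THE a. is_pth_mean p h A \<nu> a)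
     else (Inf {a. is_pth_mean p h A \<nu> a} + Sup {a. is_pth_mean p h A \<nu> a}) / 2)"

definition eico :: "ereal \<Rightarrow> ereal \<Rightarrow> real set" where
  "eico r s = {x. r \<le> ereal x \<and> ereal x < s}"

end

theory Submission
  imports Defs "HOL-Probability.Distribution_Functions"
begin

text \<open>
  A minimiser \<open>g\<close> is no worse than the nearest-point quantizer of its own finite range \<open>V\<close>,
  which beats \<open>g\<close> pointwise; so \<open>V\<close> is an optimal codebook of at most \<open>k\<close> points for the law
  \<open>\<mu>\<^sub>f\<close> of \<open>f\<close>, and \<open>g\<close> is a.e. the nearest-point quantizer of \<open>V\<close>. As \<open>\<mu>\<^sub>f\<close> is atomless,
  one more codepoint always lowers the quantization error strictly, so \<open>V\<close> has exactly \<open>k\<close>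
  points \<open>a\<^sub>1 < \<dots> < a\<^sub>k\<close>, and no Voronoi cell \<open>[r\<^sub>i, r\<^sub>i\<^sub>+\<^sub>1)\<close> (cut at midpoints and at the
  essential bounds of \<open>f\<close>) can be null. The error is the sum over the cells of
  \<open>\<integral>\<^bsub>cell\<^esub> \<bar>x - a\<^sub>i\<bar>\<^sup>p d\<mu>\<^sub>f\<close>, and moving one codepoint only changes its own term, so each
  \<open>a\<^sub>i\<close> is a \<open>p\<close>-th mean of its cell. Finally, two distinct \<open>p\<close>-th means of a cell would leave a
  null gap between them inside it, by strict convexity, which a strictly increasing
  \<open>F\<^sub>f\<close> excludes.
\<close>

lemma abs_diff_powr_le:
  fixes x y p :: real
  assumes "0 < p"
  shows "\<bar>x - y\<bar> powr p \<le> 2 powr p * (\<bar>x\<bar> powr p + \<bar>y\<bar> powr p)"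
proof -
  have "\<bar>x - y\<bar> powr p \<le> (2 * max \<bar>x\<bar> \<bar>y\<bar>) powr p"
    using assms by (intro powr_mono2) auto
  also have "\<dots> = 2 powr p * max \<bar>x\<bar> \<bar>y\<bar> powr p"
    by (simp add: powr_mult)
  also have "max \<bar>x\<bar> \<bar>y\<bar> powr p \<le> \<bar>x\<bar> powr p + \<bar>y\<bar> powr p"
    by (simp add: max_def)
  finally show ?thesis
    by simp
qed

lemma midpoint_powr_le:
  fixes u v p :: real
  assumes "1 \<le> p" "0 \<le> u" "0 \<le> v"
  shows "2 * ((u + v) / 2) powr p \<le> u powr p + v powr p"
proof (cases "u = 0 \<or> v = 0")
  case True
  have "2 * (w / 2) powr p \<le> w powr p" if "0 \<le> w" for w :: real
  proof -
    have "(1 / 2 :: real) powr p \<le> (1 / 2) powr 1"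
      using assms(1) by (intro powr_mono') auto
    then have "w powr p * (1 / 2) powr p \<le> w powr p * (1 / 2)"
      by (intro mult_left_mono) auto
    then show ?thesis
      using that by (simp add: powr_divide mult.commute)
  qed
  then show ?thesis
    using True assms by auto
next
  case False
  then have "((1 - 1 / 2) *\<^sub>R u + (1 / 2) *\<^sub>R v) powr p \<le> (1 - 1 / 2) * u powr p + (1 / 2) * v powr p"
    using assms by (intro convex_onD[OF powr_convex]) auto
  then show ?thesis
    by (simp add: add_divide_distrib)
qed

text \<open>The strict form is stated only for \<open>x\<close> between the two points: for \<open>p = 1\<close> it fails
  outside them.\<close>
lemma abs_diff_midpoint_powr_le:
  fixes x m1 m2 p :: real
  assumes "1 \<le> p"
  shows "2 * \<bar>x - (m1 + m2) / 2\<bar> powr p \<le> \<bar>x - m1\<bar> powr p + \<bar>x - m2\<bar> powr p"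
    and "m1 < x \<Longrightarrow> x < m2 \<Longrightarrow>
      2 * \<bar>x - (m1 + m2) / 2\<bar> powr p < \<bar>x - m1\<bar> powr p + \<bar>x - m2\<bar> powr p"
proof -
  have mid: "2 * ((\<bar>x - m1\<bar> + \<bar>x - m2\<bar>) / 2) powr p \<le> \<bar>x - m1\<bar> powr p + \<bar>x - m2\<bar> powr p"
    using midpoint_powr_le[OF assms] by simp
  have split: "x - (m1 + m2) / 2 = ((x - m1) + (x - m2)) / 2"
    by (simp add: field_simps)
  have "\<bar>x - (m1 + m2) / 2\<bar> \<le> (\<bar>x - m1\<bar> + \<bar>x - m2\<bar>) / 2"
    unfolding split using abs_triangle_ineq[of "x - m1" "x - m2"] by simp
  then have "\<bar>x - (m1 + m2) / 2\<bar> powr p \<le> ((\<bar>x - m1\<bar> + \<bar>x - m2\<bar>) / 2) powr p"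
    using assms by (intro powr_mono2) auto
  then show "2 * \<bar>x - (m1 + m2) / 2\<bar> powr p \<le> \<bar>x - m1\<bar> powr p + \<bar>x - m2\<bar> powr p"
    using mid by linarith
  assume "m1 < x" "x < m2"
  then have "\<bar>x - (m1 + m2) / 2\<bar> < (\<bar>x - m1\<bar> + \<bar>x - m2\<bar>) / 2"
    by (auto simp: abs_if field_simps)
  then have "\<bar>x - (m1 + m2) / 2\<bar> powr p < ((\<bar>x - m1\<bar> + \<bar>x - m2\<bar>) / 2) powr p"
    using assms by (intro powr_less_mono2) auto
  then show "2 * \<bar>x - (m1 + m2) / 2\<bar> powr p < \<bar>x - m1\<bar> powr p + \<bar>x - m2\<bar> powr p"
    using mid by linarith
qed

lemma powr_le_powr_iff:
  fixes x y p :: real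
  assumes "0 \<le> x" "0 \<le> y" "0 < p"
  shows "x powr p \<le> y powr p \<longleftrightarrow> x \<le> y"
  using assms by (meson not_le powr_less_mono2 powr_mono2 less_imp_le)

section \<open>Quantization cost and \<open>p\<close>-th means\<close>

lemma borel_measurable_infdist[measurable]:
  "(\<lambda>x. infdist x W) \<in> borel_measurable borel"
  by (intro borel_measurable_continuous_onI continuous_on_infdist continuous_on_id)

definition quant_cost :: "real measure \<Rightarrow> real \<Rightarrow> real set \<Rightarrow> ennreal" where
  "quant_cost N p W = (\<integral>\<^sup>+x. ennreal (infdist x W powr p) \<partial>N)"

text \<open>Codebooks are required to be nonempty: the distance to the empty set is \<open>0\<close>.\<close>
definition optimal_codebook :: "real measure \<Rightarrow> real \<Rightarrow> nat \<Rightarrow> real set \<Rightarrow> bool" where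
  "optimal_codebook N p k V \<longleftrightarrow> finite V \<and> V \<noteq> {} \<and> card V \<le> k \<and>
     (\<forall>W. finite W \<and> W \<noteq> {} \<and> card W \<le> k \<longrightarrow> quant_cost N p V \<le> quant_cost N p W)"

definition abs_moment :: "real measure \<Rightarrow> real \<Rightarrow> real set \<Rightarrow> real \<Rightarrow> ennreal" where
  "abs_moment N p C c = (\<integral>\<^sup>+x. ennreal (\<bar>x - c\<bar> powr p) * indicator C x \<partial>N)"

lemma is_pth_mean_iff_abs_moment:
  "is_pth_mean p (\<lambda>x. x) C N a \<longleftrightarrow> (\<forall>b. abs_moment N p C a \<le> abs_moment N p C b)"
  unfolding is_pth_mean_def abs_moment_def ..

lemma Mp_eq_unique_pth_mean:
  assumes "\<And>m. is_pth_mean p h A \<nu> m \<longleftrightarrow> m = a"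
  shows "Mp p h A \<nu> = a"
proof -
  have "is_pth_mean p h A \<nu> = (\<lambda>m. m = a)"
    using assms by blast
  then show ?thesis
    by (simp add: Mp_def)
qed

section \<open>Nearest-point quantizers in \<open>G\<^sub>p\<^sub>,\<^sub>k\<close>\<close>

lemma quant_cost_distr:
  assumes "f \<in> borel_measurable M"
  shows "quant_cost (distr M borel f) p W = (\<integral>\<^sup>+\<omega>. ennreal (infdist (f \<omega>) W powr p) \<partial>M)"
  unfolding quant_cost_def using assms by (simp add: nn_integral_distr)

lemma Gpk_finite_range:
  assumes "g \<in> Gpk M p k"
  shows "finite (g ` space M)" and "card (g ` space M) \<le> k"
proof -
  obtain l a A where "l \<le> k" and disj: "disjoint_family_on A {..<l}"
    and cover: "(\<Union>i<l. A i) = space M"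
    and g: "\<forall>x\<in>space M. g x = (\<Sum>i<l. a i * indicator (A i) x)"
    using assms unfolding Gpk_def by blast
  have "g ` space M \<subseteq> a ` {..<l}"
  proof
    fix y assume "y \<in> g ` space M"
    then obtain x i where "x \<in> space M" "y = g x" "i < l" "x \<in> A i"
      using cover by blast
    then show "y \<in> a ` {..<l}"
      using g sum_indicator_disjoint_family[OF disj, of x i a] by auto
  qed
  then show "finite (g ` space M)"
    by (rule finite_subset) simp
  have "card (g ` space M) \<le> card (a ` {..<l})"
    using \<open>g ` space M \<subseteq> a ` {..<l}\<close> by (intro card_mono) simp_all
  also have "\<dots> \<le> k"
    using card_image_le[of "{..<l}" a] \<open>l \<le> k\<close> by simp
  finally show "card (g ` space M) \<le> k" .
qed

lemma memLp_bounded: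
  assumes "finite_measure M" "h \<in> borel_measurable M" "0 < p" "\<And>x. x \<in> space M \<Longrightarrow> \<bar>h x\<bar> \<le> B"
  shows "memLp M p h"
  unfolding memLp_def
proof
  show "integrable M (\<lambda>x. \<bar>h x\<bar> powr p)"
    using assms
    by (intro Bochner_Integration.integrable_bound[OF finite_measure.integrable_const[OF assms(1),
          of "B powr p"]] AE_I2) (auto intro: powr_mono2)
qed fact

text \<open>Any finite codebook is realised in \<open>G\<^sub>p\<^sub>,\<^sub>k\<close> by a nearest-point quantization of \<open>f\<close>;
  ties are broken in favour of the first codepoint of an enumeration, which keeps the cells
  measurable.\<close>
lemma nearest_point_quantizer_in_Gpk:
  assumes "finite_measure M" "f \<in> borel_measurable M" "0 < p"
    and W: "finite W" "W \<noteq> {}" "card W \<le> k"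
  obtains h where "h \<in> Gpk M p k" and "\<And>\<omega>. \<omega> \<in> space M \<Longrightarrow> \<bar>f \<omega> - h \<omega>\<bar> = infdist (f \<omega>) W"
proof -
  have [measurable]: "f \<in> borel_measurable M"
    by fact
  define l where "l = card W"
  obtain e where e: "bij_betw e {..<l} W"
    using ex_bij_betw_nat_finite[OF W(1)] by (auto simp: l_def atLeast0LessThan)
  define nearest where "nearest \<omega> i \<longleftrightarrow> \<bar>f \<omega> - e i\<bar> = infdist (f \<omega>) W" for \<omega> i
  define A where "A i = {\<omega>\<in>space M. nearest \<omega> i \<and> (\<forall>j<i. \<not> nearest \<omega> j)}" for i
  define h where "h \<omega> = (\<Sum>i<l. e i * indicator (A i) \<omega>)" for \<omega>
  have A_sets[measurable]: "A i \<in> sets M" for i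
    unfolding A_def nearest_def by measurable
  have disj: "disjoint_family_on A {..<l}"
    unfolding disjoint_family_on_def A_def by (auto simp: neq_iff)
  have cell: "\<exists>i<l. \<omega> \<in> A i \<and> nearest \<omega> i" if "\<omega> \<in> space M" for \<omega>
  proof -
    obtain w where "w \<in> W" "infdist (f \<omega>) W = dist (f \<omega>) w"
      using infdist_attains_inf[OF finite_imp_closed[OF W(1)] W(2)] by blast
    then obtain i where i: "i < l" "nearest \<omega> i"
      using e by (auto simp: nearest_def dist_real_def bij_betw_def)
    define i0 where "i0 = (LEAST i. nearest \<omega> i)"
    have "nearest \<omega> i0" "i0 \<le> i" "\<And>j. j < i0 \<Longrightarrow> \<not> nearest \<omega> j"
      using LeastI[of "nearest \<omega>"] Least_le[of "nearest \<omega>"] not_less_Least i(2)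
      unfolding i0_def by blast+
    then show ?thesis
      using that i(1) by (auto simp: A_def intro!: exI[of _ i0])
  qed
  have h_cell: "h \<omega> = e i" if "\<omega> \<in> A i" "i < l" for \<omega> i
    unfolding h_def using sum_indicator_disjoint_family[OF disj that(1)] that(2) by simp
  have h_dist: "\<bar>f \<omega> - h \<omega>\<bar> = infdist (f \<omega>) W" if "\<omega> \<in> space M" for \<omega>
    using cell[OF that] h_cell by (auto simp: nearest_def)
  have h_bound: "\<bar>h \<omega>\<bar> \<le> (\<Sum>i<l. \<bar>e i\<bar>)" if \<omega>: "\<omega> \<in> space M" for \<omega>
  proof -
    obtain i where "i < l" "\<omega> \<in> A i"
      using cell[OF \<omega>] by blast
    then show ?thesis
      using h_cell member_le_sum[of i "{..<l}" "\<lambda>i. \<bar>e i\<bar>"] by simp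
  qed
  have "h \<in> borel_measurable M"
    unfolding h_def by measurable
  then have "memLp M p h"
    using h_bound by (rule memLp_bounded[OF \<open>finite_measure M\<close> _ \<open>0 < p\<close>])
  moreover have "(\<Union>i<l. A i) = space M"
    using cell by (auto simp: A_def)
  ultimately have "h \<in> Gpk M p k"
    unfolding Gpk_def mem_Collect_eq
    by (intro exI[of _ l] exI[of _ e] exI[of _ A]) (use disj W(3) in \<open>auto simp: l_def h_def\<close>)
  then show ?thesis
    using that h_dist by blast
qed

lemma integrable_abs_diff_powr:
  assumes "memLp M p f" "memLp M p h" "0 < p"
  shows "integrable M (\<lambda>x. \<bar>f x - h x\<bar> powr p)"
proof (rule Bochner_Integration.integrable_bound)
  have [measurable]: "f \<in> borel_measurable M" "h \<in> borel_measurable M"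
    using assms unfolding memLp_def by auto
  show "integrable M (\<lambda>x. 2 powr p * (\<bar>f x\<bar> powr p + \<bar>h x\<bar> powr p))"
    using assms unfolding memLp_def by auto
  show "(\<lambda>x. \<bar>f x - h x\<bar> powr p) \<in> borel_measurable M"
    by measurable
  show "AE x in M. norm (\<bar>f x - h x\<bar> powr p) \<le> norm (2 powr p * (\<bar>f x\<bar> powr p + \<bar>h x\<bar> powr p))"
    using abs_diff_powr_le[OF assms(3)] by auto
qed

lemma nn_integral_abs_diff_powr:
  assumes "memLp M p f" "memLp M p h" "0 < p"
  shows "(\<integral>\<^sup>+x. ennreal (\<bar>f x - h x\<bar> powr p) \<partial>M) = ennreal (\<integral>x. \<bar>f x - h x\<bar> powr p \<partial>M)"
  using integrable_abs_diff_powr[OF assms] by (intro nn_integral_eq_integral) auto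

lemma nn_integral_le_if_Lp_norm_le:
  assumes f: "memLp M p f" and g: "memLp M p g" and h: "memLp M p h" and p: "0 < p"
    and "Lp_norm M p (\<lambda>x. f x - g x) \<le> Lp_norm M p (\<lambda>x. f x - h x)"
  shows "(\<integral>\<^sup>+x. ennreal (\<bar>f x - g x\<bar> powr p) \<partial>M) \<le> (\<integral>\<^sup>+x. ennreal (\<bar>f x - h x\<bar> powr p) \<partial>M)"
proof -
  have "(\<integral>x. \<bar>f x - g x\<bar> powr p \<partial>M) powr (1 / p) \<le> (\<integral>x. \<bar>f x - h x\<bar> powr p \<partial>M) powr (1 / p)"
    using assms(5) by (simp add: Lp_norm_def)
  then have "(\<integral>x. \<bar>f x - g x\<bar> powr p \<partial>M) \<le> (\<integral>x. \<bar>f x - h x\<bar> powr p \<partial>M)"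
    using p by (subst (asm) powr_le_powr_iff) auto
  then show ?thesis
    unfolding nn_integral_abs_diff_powr[OF f g p] nn_integral_abs_diff_powr[OF f h p]
    by (rule ennreal_leI)
qed

lemma AE_le_if_nn_integral_le:
  assumes [measurable]: "u \<in> borel_measurable M" "v \<in> borel_measurable M"
    and le: "\<And>x. x \<in> space M \<Longrightarrow> u x \<le> v x"
    and int_le: "(\<integral>\<^sup>+x. v x \<partial>M) \<le> (\<integral>\<^sup>+x. u x \<partial>M)" and fin: "(\<integral>\<^sup>+x. u x \<partial>M) \<noteq> \<infinity>"
  shows "AE x in M. v x \<le> u x"
proof (rule ccontr)
  assume "\<not> (AE x in M. v x \<le> u x)"
  then have "(\<integral>\<^sup>+x. u x \<partial>M) < (\<integral>\<^sup>+x. v x \<partial>M)"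
    using le by (intro nn_integral_less[OF _ _ fin AE_I2]) auto
  then show False
    using int_le by simp
qed

lemma Gpk_minimizer_optimal_codebook:
  assumes M: "finite_measure M" "space M \<noteq> {}" and p: "0 < p" and f: "memLp M p f"
    and g: "g \<in> Gpk M p k"
    and min: "\<forall>h\<in>Gpk M p k. Lp_norm M p (\<lambda>x. f x - g x) \<le> Lp_norm M p (\<lambda>x. f x - h x)"
  shows "optimal_codebook (distr M borel f) p k (g ` space M)"
    and "AE \<omega> in M. \<bar>f \<omega> - g \<omega>\<bar> = infdist (f \<omega>) (g ` space M)"
proof -
  define V where "V = g ` space M"
  define E where "E h = (\<integral>\<^sup>+\<omega>. ennreal (\<bar>f \<omega> - h \<omega>\<bar> powr p) \<partial>M)" for h
  have gL: "memLp M p g"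
    using g unfolding Gpk_def by blast
  have f_meas[measurable]: "f \<in> borel_measurable M" and [measurable]: "g \<in> borel_measurable M"
    using f gL by (simp_all add: memLp_def)
  have V: "finite V" "V \<noteq> {}" "card V \<le> k"
    using Gpk_finite_range[OF g] M(2) by (auto simp: V_def)
  have E_le_cost: "E g \<le> quant_cost (distr M borel f) p W"
    if W: "finite W" "W \<noteq> {}" "card W \<le> k" for W
  proof -
    obtain h where h: "h \<in> Gpk M p k" and "\<And>\<omega>. \<omega> \<in> space M \<Longrightarrow> \<bar>f \<omega> - h \<omega>\<bar> = infdist (f \<omega>) W"
      using nearest_point_quantizer_in_Gpk[OF M(1) f_meas p W] by blast
    then have "E h = quant_cost (distr M borel f) p W"
      unfolding E_def quant_cost_distr[OF f_meas] by (intro nn_integral_cong) simp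
    moreover have "E g \<le> E h"
      unfolding E_def using h min by (intro nn_integral_le_if_Lp_norm_le[OF f gL _ p]) (auto simp: Gpk_def)
    ultimately show ?thesis
      by simp
  qed
  have infdist_le_g: "infdist (f \<omega>) V \<le> \<bar>f \<omega> - g \<omega>\<bar>" if "\<omega> \<in> space M" for \<omega>
    using infdist_le[of "g \<omega>" V "f \<omega>"] that by (simp add: V_def dist_real_def)
  have cost_le_E: "quant_cost (distr M borel f) p V \<le> E g"
    unfolding quant_cost_distr[OF f_meas] E_def using infdist_le_g p
    by (intro nn_integral_mono ennreal_leI powr_mono2) (auto simp: infdist_nonneg)
  then show "optimal_codebook (distr M borel f) p k (g ` space M)"
    unfolding optimal_codebook_def V_def[symmetric] using V E_le_cost by (meson order_trans)
  have "E g \<noteq> \<infinity>"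
    unfolding E_def nn_integral_abs_diff_powr[OF f gL p] by simp
  then have "AE \<omega> in M. ennreal (\<bar>f \<omega> - g \<omega>\<bar> powr p) \<le> ennreal (infdist (f \<omega>) V powr p)"
    using cost_le_E E_le_cost[OF V] infdist_le_g p
    by (intro AE_le_if_nn_integral_le)
      (auto simp: E_def quant_cost_distr[OF f_meas] top_unique infdist_nonneg
        intro!: ennreal_leI powr_mono2)
  with AE_space show "AE \<omega> in M. \<bar>f \<omega> - g \<omega>\<bar> = infdist (f \<omega>) (g ` space M)"
  proof eventually_elim
    case (elim \<omega>)
    have "\<bar>f \<omega> - g \<omega>\<bar> powr p \<le> infdist (f \<omega>) V powr p"
      using elim(2) by (simp only: ennreal_le_iff[OF powr_ge_zero])
    then have "\<bar>f \<omega> - g \<omega>\<bar> \<le> infdist (f \<omega>) V"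
      by (simp only: powr_le_powr_iff[OF abs_ge_zero infdist_nonneg p])
    then show ?case
      unfolding V_def[symmetric] using infdist_le_g[OF elim(1)] by linarith
  qed
qed

section \<open>Finite Borel measures on the real line\<close>

lemma nn_integral_less_if_less_on:
  assumes [measurable]: "u \<in> borel_measurable M" "v \<in> borel_measurable M"
    and fin: "(\<integral>\<^sup>+x. u x \<partial>M) \<noteq> \<infinity>" and le: "\<And>x. u x \<le> v x"
    and S: "S \<in> sets M" "emeasure M S \<noteq> 0" and less: "\<And>x. x \<in> S \<Longrightarrow> u x < v x"
  shows "(\<integral>\<^sup>+x. u x \<partial>M) < (\<integral>\<^sup>+x. v x \<partial>M)"
proof (rule nn_integral_less[OF _ _ fin AE_I2[OF le]])
  show "\<not> (AE x in M. v x \<le> u x)"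
  proof
    assume "AE x in M. v x \<le> u x"
    then have "AE x in M. x \<notin> S"
      by eventually_elim (use less in force)
    then show False
      using S AE_iff_null_sets[OF S(1)] by auto
  qed
qed measurable

context finite_borel_measure
begin

lemma borel_measurable_M: "h \<in> borel_measurable borel \<Longrightarrow> h \<in> borel_measurable M"
  using measurable_cong_sets[OF M_is_borel refl] by blast

lemma null_sets_Iic_cdf_zero:
  assumes "cdf M q = 0"
  shows "{..q} \<in> null_sets M"
  using assms by (intro null_setsI) (auto simp: cdf_def emeasure_eq_measure)

lemma AE_ge_Sup_cdf_zero: "AE x in M. Sup (ereal ` {z. cdf M z = 0}) \<le> ereal x"
proof -
  define Q where "Q = {q \<in> \<rat>. cdf M q = 0}"
  have "{x. ereal x < Sup (ereal ` {z. cdf M z = 0})} \<subseteq> (\<Union>q\<in>Q. {..q})"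
  proof safe
    fix x assume "ereal x < Sup (ereal ` {z. cdf M z = 0})"
    then obtain z where z: "cdf M z = 0" "x < z"
      by (auto simp: less_Sup_iff)
    then obtain q where q: "q \<in> \<rat>" "x < q" "q < z"
      using Rats_dense_in_real by blast
    have "cdf M q = 0"
      using cdf_nondecreasing[of q z] cdf_nonneg[of q] z q(3) by simp
    then show "x \<in> (\<Union>q\<in>Q. {..q})"
      using q by (auto simp: Q_def)
  qed
  moreover have "(\<Union>q\<in>Q. {..q}) \<in> null_sets M"
    by (rule null_sets_UN'[OF countable_subset[OF _ countable_rat]])
      (auto simp: Q_def intro: null_sets_Iic_cdf_zero)
  ultimately have "{x. ereal x < Sup (ereal ` {z. cdf M z = 0})} \<in> null_sets M"
    by (rule null_sets_subset[rotated 2]) (intro sets_M, measurable)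
  then show ?thesis
    by (rule AE_not_in[THEN eventually_mono]) auto
qed

text \<open>Unlike the lower end, the upper endpoint itself may be charged, hence the hypothesis.\<close>
lemma AE_less_Inf_cdf_full:
  assumes atomless: "\<And>x. emeasure M {x} = 0"
  shows "AE x in M. ereal x < Inf (ereal ` {z. cdf M z = measure M (space M)})"
proof -
  define B where "B = Inf (ereal ` {z. cdf M z = measure M (space M)})"
  define Q where "Q = {q \<in> \<rat>. cdf M q = measure M (space M)}"
  have "{x. B \<le> ereal x} \<subseteq> {real_of_ereal B} \<union> (\<Union>q\<in>Q. {q<..})"
  proof safe
    fix x assume x: "B \<le> ereal x" "x \<notin> (\<Union>q\<in>Q. {q<..})"
    show "x = real_of_ereal B"
    proof (rule ccontr)
      assume "x \<noteq> real_of_ereal B"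
      with x(1) have "B < ereal x"
        by (cases B) auto
      then obtain z where z: "cdf M z = measure M (space M)" "z < x"
        by (auto simp: B_def Inf_less_iff)
      then obtain q where q: "q \<in> \<rat>" "z < q" "q < x"
        using Rats_dense_in_real by blast
      have "cdf M q = measure M (space M)"
        using cdf_nondecreasing[of z q] cdf_bounded[of q] z q(2) by simp
      then show False
        using x(2) q by (auto simp: Q_def)
    qed
  qed
  moreover have "{q<..} \<in> null_sets M" if "q \<in> Q" for q
  proof -
    have "{..q} \<in> sets M"
      by (intro sets_M) measurable
    then have "measure M {q<..} = measure M (space M) - cdf M q"
      using finite_measure_compl[of "{..q}"] by (simp add: borel_UNIV cdf_def Compl_eq_Diff_UNIV[symmetric])
    then show ?thesis
      using that by (intro null_setsI) (auto simp: Q_def emeasure_eq_measure)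
  qed
  then have "{real_of_ereal B} \<union> (\<Union>q\<in>Q. {q<..}) \<in> null_sets M"
    using atomless by (intro null_sets.Un null_sets_UN'[OF countable_subset[OF _ countable_rat]])
      (auto simp: Q_def intro!: null_setsI)
  ultimately have "{x. B \<le> ereal x} \<in> null_sets M"
    by (rule null_sets_subset[rotated 2]) (intro sets_M, measurable)
  then show ?thesis
    unfolding B_def[symmetric] by (rule AE_not_in[THEN eventually_mono]) auto
qed

lemma borel_measurable_abs_moment_integrand[measurable]:
  assumes [measurable]: "C \<in> sets borel"
  shows "(\<lambda>x. ennreal (\<bar>x - c\<bar> powr p) * indicator C x) \<in> borel_measurable M"
  by (intro borel_measurable_M) measurable

lemma abs_moment_less:
  assumes C: "C \<in> sets borel" "emeasure M C \<noteq> 0" and p: "0 < p"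
    and fin: "abs_moment M p C c1 \<noteq> \<infinity>"
    and closer: "\<And>x. x \<in> C \<Longrightarrow> \<bar>x - c1\<bar> < \<bar>x - c2\<bar>"
  shows "abs_moment M p C c1 < abs_moment M p C c2"
  unfolding abs_moment_def
proof (rule nn_integral_less_if_less_on[where S = C])
  show "(\<integral>\<^sup>+x. ennreal (\<bar>x - c1\<bar> powr p) * indicator C x \<partial>M) \<noteq> \<infinity>"
    using fin by (simp add: abs_moment_def)
  show "ennreal (\<bar>x - c1\<bar> powr p) * indicator C x \<le> ennreal (\<bar>x - c2\<bar> powr p) * indicator C x" for x
    using closer[of x] p by (cases "x \<in> C") (auto intro!: ennreal_leI powr_mono2)
  show "ennreal (\<bar>x - c1\<bar> powr p) * indicator C x < ennreal (\<bar>x - c2\<bar> powr p) * indicator C x"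
    if "x \<in> C" for x
    using closer[OF that] p that by (auto intro!: ennreal_lessI powr_less_mono2)
qed (use C in auto)

text \<open>Moving a candidate towards the cell brings it strictly closer to every point of the cell.\<close>
lemma pth_mean_between_endpoints:
  assumes nonnull: "emeasure M (eico r s) \<noteq> 0" and p: "0 < p"
    and fin: "\<And>c. abs_moment M p (eico r s) c \<noteq> \<infinity>"
    and mean: "is_pth_mean p (\<lambda>x. x) (eico r s) M m"
  shows "r \<le> ereal m" and "ereal m \<le> s"
proof -
  have C: "eico r s \<in> sets borel"
    unfolding eico_def by measurable
  have nonempty: "eico r s \<noteq> {}"
    using nonnull by auto
  have no_better: "\<not> abs_moment M p (eico r s) c < abs_moment M p (eico r s) m" for c
    using mean by (simp add: is_pth_mean_iff_abs_moment not_less)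
  show "r \<le> ereal m"
  proof (rule ccontr)
    assume "\<not> r \<le> ereal m"
    moreover have "r \<noteq> \<infinity>"
      using nonempty by (auto simp: eico_def)
    ultimately obtain \<rho> where \<rho>: "r = ereal \<rho>" "m < \<rho>"
      by (cases r) auto
    have "\<bar>x - \<rho>\<bar> < \<bar>x - m\<bar>" if "x \<in> eico r s" for x
      using that \<rho> by (auto simp: eico_def)
    then show False
      using abs_moment_less[OF C nonnull p fin] no_better by blast
  qed
  show "ereal m \<le> s"
  proof (rule ccontr)
    assume "\<not> ereal m \<le> s"
    moreover have "s \<noteq> - \<infinity>"
      using nonempty by (auto simp: eico_def)
    ultimately obtain \<sigma> where \<sigma>: "s = ereal \<sigma>" "\<sigma> < m"
      by (cases s) auto
    have "\<bar>x - \<sigma>\<bar> < \<bar>x - m\<bar>" if "x \<in> eico r s" for x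
      using that \<sigma> by (auto simp: eico_def)
    then show False
      using abs_moment_less[OF C nonnull p fin] no_better by blast
  qed
qed

lemma abs_moment_midpoint_less:
  assumes C: "C \<in> sets borel" and p: "1 \<le> p"
    and fin: "abs_moment M p C ((m1 + m2) / 2) \<noteq> \<infinity>"
    and charged: "emeasure M ({m1<..<m2} \<inter> C) \<noteq> 0"
  shows "2 * abs_moment M p C ((m1 + m2) / 2) < abs_moment M p C m1 + abs_moment M p C m2"
proof -
  define c where "c = (m1 + m2) / 2"
  define u where "u x = ennreal (2 * \<bar>x - c\<bar> powr p) * indicator C x" for x
  define v where "v x = ennreal (\<bar>x - m1\<bar> powr p + \<bar>x - m2\<bar> powr p) * indicator C x" for x
  have [measurable]: "C \<in> sets borel"
    by fact
  have "u = (\<lambda>x. 2 * (ennreal (\<bar>x - c\<bar> powr p) * indicator C x))"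
    by (simp add: fun_eq_iff u_def ennreal_mult mult.assoc)
  then have u_eq: "(\<integral>\<^sup>+x. u x \<partial>M) = 2 * abs_moment M p C c"
    unfolding abs_moment_def by (simp add: nn_integral_cmult)
  have "v = (\<lambda>x. ennreal (\<bar>x - m1\<bar> powr p) * indicator C x + ennreal (\<bar>x - m2\<bar> powr p) * indicator C x)"
    by (simp add: fun_eq_iff v_def distrib_right)
  then have v_eq: "(\<integral>\<^sup>+x. v x \<partial>M) = abs_moment M p C m1 + abs_moment M p C m2"
    unfolding abs_moment_def by (simp only:) (rule nn_integral_add; measurable)
  have "(\<integral>\<^sup>+x. u x \<partial>M) < (\<integral>\<^sup>+x. v x \<partial>M)"
  proof (rule nn_integral_less_if_less_on[where S = "{m1<..<m2} \<inter> C"])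
    have "2 * abs_moment M p C c \<noteq> \<infinity>"
      using fin by (simp add: c_def ennreal_mult_eq_top_iff)
    then show "(\<integral>\<^sup>+x. u x \<partial>M) \<noteq> \<infinity>"
      unfolding u_eq .
    show "u x \<le> v x" for x
      unfolding u_def v_def c_def using abs_diff_midpoint_powr_le(1)[OF p, of x m1 m2]
      by (intro mult_right_mono ennreal_leI) auto
    show "u x < v x" if x: "x \<in> {m1<..<m2} \<inter> C" for x
    proof -
      have "2 * \<bar>x - c\<bar> powr p < \<bar>x - m1\<bar> powr p + \<bar>x - m2\<bar> powr p"
        using abs_diff_midpoint_powr_le(2)[OF p, of m1 x m2] x by (simp add: c_def)
      moreover have "0 \<le> 2 * \<bar>x - c\<bar> powr p"
        by simp
      ultimately have "ennreal (2 * \<bar>x - c\<bar> powr p) < ennreal (\<bar>x - m1\<bar> powr p + \<bar>x - m2\<bar> powr p)"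
        by (intro ennreal_lessI) linarith+
      then show ?thesis
        using x by (simp add: u_def v_def del: ennreal_plus)
    qed
  qed (use charged in \<open>auto simp: u_def v_def intro!: borel_measurable_M\<close>)
  then show ?thesis
    by (simp add: u_eq v_eq c_def)
qed

text \<open>Between two distinct \<open>p\<close>-th means of a cell their midpoint would do strictly better, unless
  the cell is null between them.\<close>
lemma pth_mean_unique:
  assumes nonnull: "emeasure M (eico r s) \<noteq> 0" and p: "1 \<le> p"
    and fin: "\<And>c. abs_moment M p (eico r s) c \<noteq> \<infinity>"
    and charged: "\<And>u v. r \<le> ereal u \<Longrightarrow> u < v \<Longrightarrow> ereal v \<le> s \<Longrightarrow> emeasure M {u<..v} \<noteq> 0"
    and mean1: "is_pth_mean p (\<lambda>x. x) (eico r s) M m1"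
    and mean2: "is_pth_mean p (\<lambda>x. x) (eico r s) M m2"
  shows "m1 = m2"
proof -
  have C: "eico r s \<in> sets borel"
    unfolding eico_def by measurable
  have False if m12: "m1 < m2" and means: "is_pth_mean p (\<lambda>x. x) (eico r s) M m1"
    "is_pth_mean p (\<lambda>x. x) (eico r s) M m2" for m1 m2
  proof -
    have ends: "r \<le> ereal m1" "ereal m2 \<le> s"
      using pth_mean_between_endpoints[OF nonnull _ fin] means p by auto
    define u where "u = (2 * m1 + m2) / 3"
    define v where "v = (m1 + 2 * m2) / 3"
    have uv: "m1 < u" "u < v" "v < m2"
      using m12 by (simp_all add: u_def v_def field_simps)
    have "r \<le> ereal u" "ereal v \<le> s"
      using order.trans[OF ends(1), of "ereal u"] order.trans[OF _ ends(2), of "ereal v"] uv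
      by auto
    then have "emeasure M {u<..v} \<noteq> 0"
      using charged uv(2) by blast
    moreover have "{u<..v} \<subseteq> {m1<..<m2} \<inter> eico r s"
    proof
      fix y assume "y \<in> {u<..v}"
      then have y: "m1 < y" "y < m2"
        using uv by auto
      then have "r \<le> ereal y" "ereal y < s"
        using order.trans[OF ends(1), of "ereal y"] less_le_trans[OF _ ends(2), of "ereal y"] by auto
      then show "y \<in> {m1<..<m2} \<inter> eico r s"
        using y by (simp add: eico_def)
    qed
    ultimately have "emeasure M ({m1<..<m2} \<inter> eico r s) \<noteq> 0"
      using emeasure_mono[of "{u<..v}" "{m1<..<m2} \<inter> eico r s" M] C
      by (auto simp: M_is_borel)
    then have "2 * abs_moment M p (eico r s) ((m1 + m2) / 2)
        < abs_moment M p (eico r s) m1 + abs_moment M p (eico r s) m2"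
      by (rule abs_moment_midpoint_less[OF C p fin])
    moreover have "abs_moment M p (eico r s) m1 + abs_moment M p (eico r s) m2
        \<le> 2 * abs_moment M p (eico r s) ((m1 + m2) / 2)"
      using means by (auto simp: is_pth_mean_iff_abs_moment mult_2 intro: add_mono)
    ultimately show False
      by simp
  qed
  then show ?thesis
    using mean1 mean2 by (metis linorder_neqE_linordered_idom)
qed

end

section \<open>Voronoi cells on the real line\<close>

lemma finite_set_sorted_enumeration:
  fixes V :: "'a::linorder set"
  assumes "finite V"
  obtains a where "strict_mono_on {1..card V} a" "a ` {1..card V} = V"
proof
  define s where "s = sorted_list_of_set V"
  have len: "length s = card V" and set_s: "set s = V" and sorted: "sorted_wrt (<) s"
    using assms by (simp_all add: s_def)
  show "strict_mono_on {1..card V} (\<lambda>i. s ! (i - 1))"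
    using sorted_wrt_nth_less[OF sorted] len by (auto intro!: strict_mono_onI)
  have "(\<lambda>i. s ! (i - 1)) ` {1..card V} = (!) s ` {..<length s}"
    unfolding len image_Suc_lessThan[symmetric] image_image by simp
  then show "(\<lambda>i. s ! (i - 1)) ` {1..card V} = V"
    by (auto simp: set_s[symmetric] in_set_conv_nth)
qed

lemma voronoi_cell_nearest:
  fixes a :: "nat \<Rightarrow> real" and r :: "nat \<Rightarrow> ereal"
  assumes a: "strict_mono_on {1..k} a"
    and r: "\<And>i. i \<in> {2..k} \<Longrightarrow> r i = ereal ((a (i - 1) + a i) / 2)"
    and i: "i \<in> {1..k}" and j: "j \<in> {1..k}" and x: "x \<in> eico (r i) (r (Suc i))"
  shows "\<bar>x - a i\<bar> \<le> \<bar>x - a j\<bar>" and "j \<noteq> i \<Longrightarrow> ereal x \<noteq> r i \<Longrightarrow> \<bar>x - a i\<bar> < \<bar>x - a j\<bar>"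
proof -
  have "\<bar>x - a i\<bar> \<le> \<bar>x - a j\<bar> \<and> (j \<noteq> i \<longrightarrow> ereal x \<noteq> r i \<longrightarrow> \<bar>x - a i\<bar> < \<bar>x - a j\<bar>)"
  proof (cases j i rule: linorder_cases)
    case less
    then have i': "i \<in> {2..k}" "i - 1 \<in> {1..k}"
      using i j by auto
    have "a j \<le> a (i - 1)" "a (i - 1) < a i"
      using less j i' by (auto intro!: strict_mono_on_leD[OF a] strict_mono_onD[OF a])
    moreover have "(a (i - 1) + a i) / 2 \<le> x"
      using x r[OF i'(1)] by (simp add: eico_def)
    moreover have "(a (i - 1) + a i) / 2 < x" if "ereal x \<noteq> r i"
      using x r[OF i'(1)] that by (auto simp: eico_def)
    ultimately show ?thesis
      by (auto simp: abs_if field_simps)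
  next
    case greater
    then have i': "Suc i \<in> {2..k}"
      using i j by auto
    have "a i < a (Suc i)" "a (Suc i) \<le> a j"
      using greater j i' by (auto intro!: strict_mono_on_leD[OF a] strict_mono_onD[OF a])
    moreover have "x < (a i + a (Suc i)) / 2"
      using x r[OF i'] by (simp add: eico_def)
    ultimately show ?thesis
      by (auto simp: abs_if field_simps)
  qed simp
  then show "\<bar>x - a i\<bar> \<le> \<bar>x - a j\<bar>" and "j \<noteq> i \<Longrightarrow> ereal x \<noteq> r i \<Longrightarrow> \<bar>x - a i\<bar> < \<bar>x - a j\<bar>"
    by blast+
qed

lemma voronoi_cells_disjoint:
  fixes a :: "nat \<Rightarrow> real" and r :: "nat \<Rightarrow> ereal"
  assumes a: "strict_mono_on {1..k} a"
    and r: "\<And>i. i \<in> {2..k} \<Longrightarrow> r i = ereal ((a (i - 1) + a i) / 2)"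
  shows "disjoint_family_on (\<lambda>i. eico (r i) (r (Suc i))) {1..k}"
proof -
  have "eico (r i) (r (Suc i)) \<inter> eico (r j) (r (Suc j)) = {}"
    if ij: "i \<in> {1..k}" "j \<in> {1..k}" "i < j" for i j
  proof -
    have "a i \<le> a (j - 1)" "a (Suc i) \<le> a j"
      using ij by (auto intro!: strict_mono_on_leD[OF a])
    then have "r (Suc i) \<le> r j"
      using ij r[of "Suc i"] r[of j] by auto
    then show ?thesis
      by (auto simp: eico_def dest: less_le_trans order.trans)
  qed
  then show ?thesis
    unfolding disjoint_family_on_def by (metis inf_commute nat_neq_iff)
qed

lemma voronoi_cells_cover:
  fixes r :: "nat \<Rightarrow> ereal"
  assumes "1 \<le> k" "r 1 \<le> ereal x" "ereal x < r (Suc k)"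
  shows "\<exists>i\<in>{1..k}. x \<in> eico (r i) (r (Suc i))"
proof -
  define S where "S = {i\<in>{1..k}. r i \<le> ereal x}"
  have S: "finite S" "1 \<in> S"
    using assms by (auto simp: S_def)
  define i where "i = Max S"
  have "i \<in> S"
    using Max_in[OF S(1)] S(2) by (auto simp: i_def)
  then have i: "i \<in> {1..k}" "r i \<le> ereal x"
    by (simp_all add: S_def)
  have "ereal x < r (Suc i)"
  proof (cases "i = k")
    case False
    have "\<not> r (Suc i) \<le> ereal x"
    proof
      assume "r (Suc i) \<le> ereal x"
      then have "Suc i \<in> S"
        using i False by (auto simp: S_def)
      then show False
        using Max_ge[OF S(1)] by (fastforce simp: i_def)
    qed
    then show ?thesis
      by simp
  qed (use assms in simp)
  then show ?thesis
    using i by (auto simp: eico_def)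
qed

section \<open>Optimal quantization of an atomless law\<close>

locale real_quantization = finite_borel_measure N for N :: "real measure" +
  fixes p :: real
  assumes one_le_p: "1 \<le> p"
    and finite_pth_moment: "(\<integral>\<^sup>+x. ennreal (\<bar>x\<bar> powr p) \<partial>N) \<noteq> \<infinity>"
    and atomless: "\<And>x. emeasure N {x} = 0"
    and nontrivial: "emeasure N (space N) \<noteq> 0"
begin

lemma finite_null_sets:
  assumes "finite S"
  shows "S \<in> null_sets N"
proof -
  have sets: "T \<in> sets N" if "finite T" for T
    using that by (intro sets_M borel_closed finite_imp_closed)
  show ?thesis
    using assms by (intro null_setsI sets) (simp add: emeasure_eq_sum_singleton sets atomless)
qed

lemma abs_moment_finite: "abs_moment N p C c \<noteq> \<infinity>"
proof -
  have abs_powr_meas[measurable]: "(\<lambda>x. \<bar>x\<bar> powr p) \<in> borel_measurable N"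
    by (intro borel_measurable_M) measurable
  have "ennreal (\<bar>x - c\<bar> powr p) * indicator C x
      \<le> ennreal (2 powr p) * (ennreal (\<bar>x\<bar> powr p) + ennreal (\<bar>c\<bar> powr p))" for x
  proof -
    have "ennreal (\<bar>x - c\<bar> powr p) * indicator C x \<le> ennreal (\<bar>x - c\<bar> powr p)"
      by (simp add: indicator_def)
    also have "\<dots> \<le> ennreal (2 powr p * (\<bar>x\<bar> powr p + \<bar>c\<bar> powr p))"
      using abs_diff_powr_le one_le_p by (intro ennreal_leI) simp
    finally show ?thesis
      by (simp add: ennreal_mult)
  qed
  then have "abs_moment N p C c
      \<le> (\<integral>\<^sup>+x. ennreal (2 powr p) * (ennreal (\<bar>x\<bar> powr p) + ennreal (\<bar>c\<bar> powr p)) \<partial>N)"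
    unfolding abs_moment_def by (rule nn_integral_mono)
  also have "\<dots> = ennreal (2 powr p) * (\<integral>\<^sup>+x. ennreal (\<bar>x\<bar> powr p) + ennreal (\<bar>c\<bar> powr p) \<partial>N)"
    by (rule nn_integral_cmult) measurable
  also have "\<dots> = ennreal (2 powr p)
      * ((\<integral>\<^sup>+x. ennreal (\<bar>x\<bar> powr p) \<partial>N) + ennreal (\<bar>c\<bar> powr p) * emeasure N (space N))"
    using nn_integral_add[of "\<lambda>x. ennreal (\<bar>x\<bar> powr p)" N "\<lambda>_. ennreal (\<bar>c\<bar> powr p)"]
    by (simp add: abs_powr_meas)
  also have "\<dots> < \<infinity>"
    using finite_pth_moment by (simp add: ennreal_mult_eq_top_iff less_top[symmetric])
  finally show ?thesis
    by simp
qed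

lemma quant_cost_finite:
  assumes "W \<noteq> {}"
  shows "quant_cost N p W \<noteq> \<infinity>"
proof -
  obtain w where "w \<in> W"
    using assms by blast
  then have "quant_cost N p W \<le> abs_moment N p UNIV w"
    unfolding quant_cost_def abs_moment_def using one_le_p
    by (intro nn_integral_mono) (auto intro!: ennreal_leI powr_mono2 infdist_nonneg
        infdist_le[THEN order.trans] simp: dist_real_def)
  then show ?thesis
    using abs_moment_finite by (auto simp: top_unique)
qed

text \<open>The balls centred at rationals off \<open>U\<close>, of radius half the distance to \<open>U\<close>, cover the
  complement of the null set \<open>U\<close>; so one of them carries mass.\<close>
lemma ex_nonnull_ball_off:
  assumes U: "finite U" "U \<noteq> {}"
  shows "\<exists>w. w \<notin> U \<and> emeasure N (ball w (infdist w U / 2)) \<noteq> 0"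
proof (rule ccontr)
  assume "\<not> ?thesis"
  then have null: "ball w (infdist w U / 2) \<in> null_sets N" if "w \<notin> U" for w
    using that by (auto intro!: null_setsI)
  define Q where "Q = {q \<in> \<rat>. q \<notin> U}"
  have "x \<in> U \<union> (\<Union>q\<in>Q. ball q (infdist q U / 2))" for x
  proof (cases "x \<in> U")
    case False
    then have d: "0 < infdist x U"
      using infdist_pos_not_in_closed[OF finite_imp_closed[OF U(1)] U(2)] by blast
    obtain q where q: "q \<in> \<rat>" "x < q" "q < x + infdist x U / 4"
      using Rats_dense_in_real[of x "x + infdist x U / 4"] d by auto
    have "q \<notin> U"
      using infdist_le[of q U x] q by (auto simp: dist_real_def)
    moreover have "infdist x U \<le> infdist q U + dist x q"
      by (rule infdist_triangle)
    ultimately show ?thesis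
      using q by (auto simp: Q_def dist_real_def)
  qed simp
  then have "UNIV \<subseteq> U \<union> (\<Union>q\<in>Q. ball q (infdist q U / 2))"
    by blast
  moreover have "U \<union> (\<Union>q\<in>Q. ball q (infdist q U / 2)) \<in> null_sets N"
    using null by (intro null_sets.Un[OF finite_null_sets[OF U(1)]]
        null_sets_UN'[OF countable_subset[OF _ countable_rat]]) (auto simp: Q_def)
  ultimately have "UNIV \<in> null_sets N"
    by (rule null_sets_subset[rotated 2]) (simp add: borel_UNIV[symmetric])
  then show False
    using nontrivial by (simp add: borel_UNIV null_setsD1)
qed

text \<open>Adding the centre of such a ball strictly lowers the distance to the codebook on the whole ball.\<close>
lemma quant_cost_insert_less:
  assumes U: "finite U" "U \<noteq> {}"
  shows "\<exists>w. w \<notin> U \<and> quant_cost N p (insert w U) < quant_cost N p U"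
proof -
  obtain w where w: "w \<notin> U" "emeasure N (ball w (infdist w U / 2)) \<noteq> 0"
    using ex_nonnull_ball_off[OF U] by blast
  have closer: "infdist x (insert w U) < infdist x U" if "x \<in> ball w (infdist w U / 2)" for x
  proof -
    have "infdist x (insert w U) \<le> dist x w"
      by (rule infdist_le) simp
    moreover have "infdist w U \<le> infdist x U + dist w x"
      by (rule infdist_triangle)
    ultimately show ?thesis
      using that by (simp add: dist_commute)
  qed
  have "quant_cost N p (insert w U) < quant_cost N p U"
    unfolding quant_cost_def
  proof (rule nn_integral_less_if_less_on[where S = "ball w (infdist w U / 2)"])
    show "(\<integral>\<^sup>+x. ennreal (infdist x (insert w U) powr p) \<partial>N) \<noteq> \<infinity>"
      using quant_cost_finite[of "insert w U"] by (simp add: quant_cost_def)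
    show "ennreal (infdist x (insert w U) powr p) \<le> ennreal (infdist x U powr p)" for x
      using one_le_p U(2) by (intro ennreal_leI powr_mono2 infdist_mono) (auto simp: infdist_nonneg)
    show "ennreal (infdist x (insert w U) powr p) < ennreal (infdist x U powr p)"
      if "x \<in> ball w (infdist w U / 2)" for x
      using closer[OF that] one_le_p infdist_nonneg[of x "insert w U"]
      by (intro ennreal_lessI powr_less_mono2) auto
  qed (use w in \<open>auto intro!: borel_measurable_M\<close>)
  then show ?thesis
    using w by blast
qed

lemma optimal_codebook_less_cost:
  assumes V: "optimal_codebook N p k V" and U: "finite U" "U \<noteq> {}" "card U < k"
  shows "quant_cost N p V < quant_cost N p U"
proof -
  obtain w where w: "w \<notin> U" "quant_cost N p (insert w U) < quant_cost N p U"
    using quant_cost_insert_less[OF U(1,2)] by blast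
  have "quant_cost N p V \<le> quant_cost N p (insert w U)"
    using V U w(1) unfolding optimal_codebook_def by auto
  then show ?thesis
    using w(2) by simp
qed

lemma optimal_codebook_card:
  assumes "optimal_codebook N p k V"
  shows "card V = k"
  using optimal_codebook_less_cost[OF assms, of V] assms
  by (auto simp: optimal_codebook_def)

end

locale optimal_quantizer = real_quantization +
  fixes k :: nat and a :: "nat \<Rightarrow> real" and r :: "nat \<Rightarrow> ereal"
  assumes optimal: "optimal_codebook N p k (a ` {1..k})"
    and a_strict_mono: "strict_mono_on {1..k} a"
    and r_midpoint: "\<And>i. i \<in> {2..k} \<Longrightarrow> r i = ereal ((a (i - 1) + a i) / 2)"
    and AE_between_ends: "AE x in N. r 1 \<le> ereal x \<and> ereal x < r (Suc k)"
begin

abbreviation cell :: "nat \<Rightarrow> real set" where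
  "cell i \<equiv> eico (r i) (r (Suc i))"

lemma one_le_k: "1 \<le> k"
  using optimal by (auto simp: optimal_codebook_def)

lemma cell_sets[measurable]: "cell i \<in> sets borel"
  unfolding eico_def by measurable

lemma card_codebook: "card (a ` {1..k}) = k"
  using card_image[OF strict_mono_on_imp_inj_on[OF a_strict_mono]] by simp

lemma cells_disjoint: "disjoint_family_on cell {1..k}"
  using voronoi_cells_disjoint[OF a_strict_mono r_midpoint] by blast

lemma infdist_codebook_cell:
  assumes i: "i \<in> {1..k}" and x: "x \<in> cell i"
  shows "infdist x (a ` {1..k}) = \<bar>x - a i\<bar>"
proof (rule antisym)
  show "infdist x (a ` {1..k}) \<le> \<bar>x - a i\<bar>"
    using infdist_le[of "a i" "a ` {1..k}" x] i by (simp add: dist_real_def)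
  show "\<bar>x - a i\<bar> \<le> infdist x (a ` {1..k})"
    using i voronoi_cell_nearest(1)[OF a_strict_mono r_midpoint i _ x]
    by (auto simp: infdist_notempty dist_real_def intro!: cINF_greatest)
qed

text \<open>Ties between codepoints occur only at the finitely many cell endpoints.\<close>
lemma AE_unique_nearest:
  "AE x in N. \<exists>i\<in>{1..k}. x \<in> cell i \<and> (\<forall>j\<in>{1..k}. j \<noteq> i \<longrightarrow> \<bar>x - a i\<bar> < \<bar>x - a j\<bar>)"
proof -
  have "AE x in N. x \<notin> real_of_ereal ` r ` {1..k}"
    by (intro AE_not_in finite_null_sets) simp
  with AE_between_ends show ?thesis
  proof eventually_elim
    case (elim x)
    then obtain i where i: "i \<in> {1..k}" "x \<in> cell i"
      using voronoi_cells_cover[OF one_le_k] by blast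
    have "ereal x \<noteq> r i"
    proof
      assume "ereal x = r i"
      then have "x = real_of_ereal (r i)"
        by (metis real_of_ereal.simps(1))
      then show False
        using elim(2) i(1) by blast
    qed
    then show ?case
      using voronoi_cell_nearest(2)[OF a_strict_mono r_midpoint i(1) _ i(2)] i by blast
  qed
qed

lemma quant_cost_eq_sum_cells:
  "quant_cost N p W = (\<Sum>i=1..k. \<integral>\<^sup>+x. ennreal (infdist x W powr p) * indicator (cell i) x \<partial>N)"
proof -
  have "AE x in N. ennreal (infdist x W powr p)
      = (\<Sum>i=1..k. ennreal (infdist x W powr p) * indicator (cell i) x)"
    using AE_unique_nearest
  proof eventually_elim
    case (elim x)
    then obtain i where "i \<in> {1..k}" "x \<in> cell i"
      by blast
    then show ?case
      using sum_indicator_disjoint_family[OF cells_disjoint, of x i "\<lambda>_. ennreal (infdist x W powr p)"]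
      by simp
  qed
  then have "quant_cost N p W
      = (\<integral>\<^sup>+x. (\<Sum>i=1..k. ennreal (infdist x W powr p) * indicator (cell i) x) \<partial>N)"
    unfolding quant_cost_def by (rule nn_integral_cong_AE)
  also have "\<dots> = (\<Sum>i=1..k. \<integral>\<^sup>+x. ennreal (infdist x W powr p) * indicator (cell i) x \<partial>N)"
    by (rule nn_integral_sum) (auto intro!: borel_measurable_M)
  finally show ?thesis .
qed

lemma quant_cost_le_sum_abs_moments:
  "quant_cost N p (c ` {1..k}) \<le> (\<Sum>i=1..k. abs_moment N p (cell i) (c i))"
  unfolding quant_cost_eq_sum_cells abs_moment_def
proof (intro sum_mono nn_integral_mono)
  fix i x assume "i \<in> {1..k}"
  then have "infdist x (c ` {1..k}) \<le> \<bar>x - c i\<bar>"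
    using infdist_le[of "c i" "c ` {1..k}" x] by (simp add: dist_real_def)
  then show "ennreal (infdist x (c ` {1..k}) powr p) * indicator (cell i) x
      \<le> ennreal (\<bar>x - c i\<bar> powr p) * indicator (cell i) x"
    using one_le_p by (auto intro!: mult_right_mono ennreal_leI powr_mono2 infdist_nonneg)
qed

lemma quant_cost_codebook:
  "quant_cost N p (a ` {1..k}) = (\<Sum>i=1..k. abs_moment N p (cell i) (a i))"
  unfolding quant_cost_eq_sum_cells abs_moment_def
proof (intro sum.cong refl nn_integral_cong)
  fix i x assume i: "i \<in> {1..k}"
  show "ennreal (infdist x (a ` {1..k}) powr p) * indicator (cell i) x
      = ennreal (\<bar>x - a i\<bar> powr p) * indicator (cell i) x"
  proof (cases "x \<in> cell i")
    case True
    then show ?thesis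
      using infdist_codebook_cell[OF i True] by simp
  qed simp
qed

text \<open>A null cell could have its codepoint removed at no cost, contradicting the strict gain
  from every additional point.\<close>
lemma cell_measure_pos:
  assumes i: "i \<in> {1..k}"
  shows "0 < measure N (cell i)"
proof (rule ccontr)
  assume "\<not> 0 < measure N (cell i)"
  then have null: "cell i \<in> null_sets N"
    using measure_nonneg[of N "cell i"] by (intro null_setsI) (auto simp: emeasure_eq_measure)
  show False
  proof (cases "k = 1")
    case True
    have "AE x in N. x \<in> cell i"
      using AE_unique_nearest by eventually_elim (use True i in auto)
    with AE_not_in[OF null] have "AE x in N. False"
      by eventually_elim simp
    then show False
      using nontrivial by (simp add: ae_filter_eq_bot_iff[symmetric] trivial_limit_def[symmetric])
  next
    case False
    then obtain j where j: "j \<in> {1..k}" "j \<noteq> i"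
      using i one_le_k by (cases "i = 1") (auto intro: that[of 1] that[of 2])
    define c where "c = a(i := a j)"
    have "c ` {1..k} = a ` {1..k} - {a i}"
      using i j strict_mono_on_imp_inj_on[OF a_strict_mono]
      by (auto simp: c_def image_iff inj_on_eq_iff split: if_splits)
    then have "card (c ` {1..k}) < k"
      using i one_le_k card_codebook by (simp add: card_Diff_singleton)
    moreover have "c ` {1..k} \<noteq> {}"
      using one_le_k by simp
    ultimately
    have "quant_cost N p (a ` {1..k}) < quant_cost N p (c ` {1..k})"
      by (intro optimal_codebook_less_cost[OF optimal]) auto
    also have "\<dots> \<le> (\<Sum>l=1..k. abs_moment N p (cell l) (c l))"
      by (rule quant_cost_le_sum_abs_moments)
    also have "\<dots> = (\<Sum>l=1..k. abs_moment N p (cell l) (a l))"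
      using nn_integral_null_set[OF null] by (intro sum.cong) (auto simp: c_def abs_moment_def)
    finally show False
      using quant_cost_codebook by simp
  qed
qed

lemma r_strict_mono:
  assumes "i \<in> {1..k}"
  shows "r i < r (Suc i)"
proof (rule ccontr)
  assume "\<not> r i < r (Suc i)"
  then have "cell i = {}"
    using le_less_trans[of "r i" _ "r (Suc i)"] by (auto simp: eico_def)
  then show False
    using cell_measure_pos[OF assms] by simp
qed

lemma r_mono:
  assumes "1 \<le> i" "i \<le> j" "j \<le> Suc k"
  shows "r i \<le> r j"
  using assms(2,3)
proof (induction j rule: dec_induct)
  case (step j)
  then have "r i \<le> r j" "r j < r (Suc j)"
    using assms(1) by (auto intro!: r_strict_mono)
  then show ?case
    by simp
qed simp

text \<open>Replacing a codepoint by any other value cannot lower the cost, and only its own cell's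
  contribution changes.\<close>
lemma codebook_pth_mean:
  assumes i: "i \<in> {1..k}"
  shows "is_pth_mean p (\<lambda>x. x) (cell i) N (a i)"
  unfolding is_pth_mean_iff_abs_moment
proof
  fix b
  define c where "c = a(i := b)"
  define R where "R = (\<Sum>l\<in>{1..k} - {i}. abs_moment N p (cell l) (a l))"
  have cost_eq: "quant_cost N p (a ` {1..k}) = abs_moment N p (cell i) (a i) + R"
    unfolding quant_cost_codebook R_def using i by (intro sum.remove) auto
  have "c ` {1..k} \<noteq> {}" "card (c ` {1..k}) \<le> k"
    using i card_image_le[of "{1..k}" c] by auto
  then have "abs_moment N p (cell i) (a i) + R \<le> quant_cost N p (c ` {1..k})"
    using optimal unfolding cost_eq[symmetric] optimal_codebook_def by auto
  also have "\<dots> \<le> (\<Sum>l=1..k. abs_moment N p (cell l) (c l))"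
    by (rule quant_cost_le_sum_abs_moments)
  also have "\<dots> = abs_moment N p (cell i) (c i) + (\<Sum>l\<in>{1..k} - {i}. abs_moment N p (cell l) (c l))"
    using i by (intro sum.remove) auto
  also have "\<dots> = abs_moment N p (cell i) b + R"
    unfolding R_def c_def by (intro arg_cong2[where f = "(+)"] sum.cong) auto
  finally have "abs_moment N p (cell i) (a i) + R \<le> abs_moment N p (cell i) b + R" .
  moreover have "R \<noteq> \<infinity>"
    using abs_moment_finite by (simp add: R_def less_top[symmetric])
  ultimately show "abs_moment N p (cell i) (a i) \<le> abs_moment N p (cell i) b"
    by simp
qed

lemma codebook_pth_mean_unique:
  assumes strict: "strict_mono_on {x. r 1 \<le> ereal x \<and> ereal x \<le> r (Suc k)} (cdf N)"
    and i: "i \<in> {1..k}" and mean: "is_pth_mean p (\<lambda>x. x) (cell i) N m"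
  shows "m = a i"
proof (rule pth_mean_unique[OF _ one_le_p abs_moment_finite _ mean codebook_pth_mean[OF i]])
  show "emeasure N (cell i) \<noteq> 0"
    using cell_measure_pos[OF i] by (simp add: emeasure_eq_measure)
  fix u v assume uv: "r i \<le> ereal u" "u < v" "ereal v \<le> r (Suc i)"
  have "r 1 \<le> r i" "r (Suc i) \<le> r (Suc k)"
    using i by (auto intro!: r_mono)
  then have "u \<in> {x. r 1 \<le> ereal x \<and> ereal x \<le> r (Suc k)}"
    "v \<in> {x. r 1 \<le> ereal x \<and> ereal x \<le> r (Suc k)}"
    using uv order.trans[of "r 1" "r i" "ereal u"] order.trans[of "ereal v" "r (Suc i)" "r (Suc k)"]
      order.trans[of "r 1" "ereal u" "ereal v"] order.trans[of "ereal u" "ereal v" "r (Suc k)"]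
    by auto
  then have "cdf N u < cdf N v"
    using strict_mono_onD[OF strict _ _ uv(2)] by blast
  then show "emeasure N {u<..v} \<noteq> 0"
    using emeasure_Ioc[of u v] uv(2) by simp
qed

lemma AE_eq_codebook_sum:
  assumes N: "N = distr M borel f" and [measurable]: "f \<in> borel_measurable M"
    and g: "AE \<omega> in M. g \<omega> \<in> a ` {1..k} \<and> \<bar>f \<omega> - g \<omega>\<bar> = infdist (f \<omega>) (a ` {1..k})"
  shows "AE \<omega> in M. g \<omega> = (\<Sum>i=1..k. a i * indicator (f -` cell i) \<omega>)"
proof -
  have "AE \<omega> in M. \<exists>i\<in>{1..k}. f \<omega> \<in> cell i \<and> (\<forall>j\<in>{1..k}. j \<noteq> i \<longrightarrow> \<bar>f \<omega> - a i\<bar> < \<bar>f \<omega> - a j\<bar>)"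
    using AE_unique_nearest unfolding N by (subst (asm) AE_distr_iff) measurable
  with g show ?thesis
  proof eventually_elim
    case (elim \<omega>)
    obtain i where i: "i \<in> {1..k}" "f \<omega> \<in> cell i"
      and nearest: "\<forall>j\<in>{1..k}. j \<noteq> i \<longrightarrow> \<bar>f \<omega> - a i\<bar> < \<bar>f \<omega> - a j\<bar>"
      using elim(2) by blast
    obtain j where j: "j \<in> {1..k}" "g \<omega> = a j" "\<bar>f \<omega> - a j\<bar> = infdist (f \<omega>) (a ` {1..k})"
      using elim(1) by auto
    have "j = i"
      using nearest j infdist_codebook_cell[OF i] by fastforce
    then show ?case
      using i j sum_indicator_disjoint_family[OF cells_disjoint i(2), of a]
      by (simp add: indicator_vimage)
  qed
qed

end

lemma cdf_of_eq_cdf_push: "cdf_of M f = cdf (push M f)"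
  by (simp add: fun_eq_iff cdf_of_def cdf_def)

lemma finite_borel_measure_push:
  assumes "finite_measure M" "f \<in> borel_measurable M"
  shows "finite_borel_measure (push M f)"
  unfolding finite_borel_measure_def finite_borel_measure_axioms_def push_def
  using finite_measure.finite_measure_distr[OF assms] by simp

lemma real_quantization_push:
  assumes M: "finite_measure M" "emeasure M (space M) \<noteq> 0" and p: "1 \<le> p"
    and f: "memLp M p f" and cont: "continuous_on UNIV (cdf_of M f)"
  shows "real_quantization (push M f) p"
proof -
  have f_meas[measurable]: "f \<in> borel_measurable M"
    using f by (simp add: memLp_def)
  interpret finite_borel_measure "push M f"
    by (rule finite_borel_measure_push[OF M(1) f_meas])
  show ?thesis
  proof (intro real_quantization.intro real_quantization_axioms.intro)
    show "finite_borel_measure (push M f)"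
      by unfold_locales
    show "1 \<le> p"
      by fact
    have "(\<integral>\<^sup>+x. ennreal (\<bar>x\<bar> powr p) \<partial>push M f) = (\<integral>\<^sup>+\<omega>. ennreal (\<bar>f \<omega>\<bar> powr p) \<partial>M)"
      by (simp add: push_def nn_integral_distr)
    also have "\<dots> = ennreal (\<integral>\<omega>. \<bar>f \<omega>\<bar> powr p \<partial>M)"
      using f by (intro nn_integral_eq_integral) (auto simp: memLp_def)
    finally show "(\<integral>\<^sup>+x. ennreal (\<bar>x\<bar> powr p) \<partial>push M f) \<noteq> \<infinity>"
      by simp
    show "emeasure (push M f) {x} = 0" for x
      using cont isCont_cdf[of x]
      by (simp add: cdf_of_eq_cdf_push continuous_on_eq_continuous_at emeasure_eq_measure)
    show "emeasure (push M f) (space (push M f)) \<noteq> 0"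
      using M(2) by (simp add: push_def emeasure_distr)
  qed
qed

lemma AE_push_between_afrak_bfrak:
  assumes "finite_measure M" "f \<in> borel_measurable M" "\<And>x. emeasure (push M f) {x} = 0"
  shows "AE x in push M f. afrak M f \<le> ereal x \<and> ereal x < bfrak M f"
proof -
  interpret finite_borel_measure "push M f"
    by (rule finite_borel_measure_push[OF assms(1,2)])
  have total: "measure M (space M) = measure (push M f) (space (push M f))"
    using assms(2) by (simp add: push_def measure_distr)
  show ?thesis
    using AE_ge_Sup_cdf_zero AE_less_Inf_cdf_full[OF assms(3)]
    unfolding afrak_def bfrak_def cdf_of_eq_cdf_push total by eventually_elim simp
qed

lemma (in real_quantization) Gpk_minimizer_sorted_codebook:
  assumes N: "N = push M f" and M: "finite_measure M" "space M \<noteq> {}" and f: "memLp M p f"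
    and g: "g \<in> Gpk M p k"
    and min: "\<forall>h\<in>Gpk M p k. Lp_norm M p (\<lambda>x. f x - g x) \<le> Lp_norm M p (\<lambda>x. f x - h x)"
  obtains a where "strict_mono_on {1..k} a" and "optimal_codebook N p k (a ` {1..k})"
    and "AE \<omega> in M. g \<omega> \<in> a ` {1..k} \<and> \<bar>f \<omega> - g \<omega>\<bar> = infdist (f \<omega>) (a ` {1..k})"
proof -
  define V where "V = g ` space M"
  have "0 < p"
    using one_le_p by simp
  then have opt: "optimal_codebook N p k V" and nearest: "AE \<omega> in M. \<bar>f \<omega> - g \<omega>\<bar> = infdist (f \<omega>) V"
    using Gpk_minimizer_optimal_codebook[OF M _ f g min] unfolding V_def N push_def by auto
  have V: "finite V" "card V = k"
    using opt optimal_codebook_card[OF opt] by (simp_all add: optimal_codebook_def)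
  obtain a where a: "strict_mono_on {1..k} a" "a ` {1..k} = V"
    by (rule finite_set_sorted_enumeration[OF V(1), unfolded V(2)])
  moreover have "AE \<omega> in M. g \<omega> \<in> a ` {1..k} \<and> \<bar>f \<omega> - g \<omega>\<bar> = infdist (f \<omega>) (a ` {1..k})"
    unfolding a(2) using nearest AE_space by eventually_elim (simp add: V_def)
  ultimately show ?thesis
    using that opt by blast
qed

theorem corollary2p6:
  fixes M :: "'a measure" and p :: real and k :: nat and f g :: "'a \<Rightarrow> real"
  assumes "finite_measure M"
    and "emeasure M (space M) \<noteq> 0"
    and "1 \<le> p"
    and "1 \<le> k"
    and "memLp M p f"
    and "continuous_on UNIV (cdf_of M f)"
    and "g \<in> Gpk M p k"
    and "\<forall>h\<in>Gpk M p k. Lp_norm M p (\<lambda>x. f x - g x) \<le> Lp_norm M p (\<lambda>x. f x - h x)"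
  shows "\<exists>(a::nat \<Rightarrow> real) (r::nat \<Rightarrow> ereal).
           (\<forall>i\<in>{1..<k}. a i < a (Suc i))
         \<and> r 1 = afrak M f \<and> r (Suc k) = bfrak M f
         \<and> (\<forall>i\<in>{1..k}. r i < r (Suc i))
         \<and> (\<forall>i\<in>{2..k}. r i = ereal ((a (i - 1) + a i) / 2))
         \<and> (\<forall>i\<in>{1..k}. measure (push M f) (eico (r i) (r (Suc i))) > 0)
         \<and> (\<forall>i\<in>{1..k}. is_pth_mean p (\<lambda>x. x) (eico (r i) (r (Suc i))) (push M f) (a i))
         \<and> (AE x in M. g x = (\<Sum>i=1..k. a i * indicator (f -` eico (r i) (r (Suc i))) x))
         \<and> (strict_mono_on {x. afrak M f \<le> ereal x \<and> ereal x \<le> bfrak M f} (cdf_of M f)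
              \<longrightarrow> (\<forall>i\<in>{1..k}. a i = Mp p (\<lambda>x. x) (eico (r i) (r (Suc i))) (push M f)))"
proof -
  have f[measurable]: "f \<in> borel_measurable M"
    using assms(5) by (simp add: memLp_def)
  have quantization: "real_quantization (push M f) p"
    using real_quantization_push[OF assms(1-3,5,6)] .
  interpret real_quantization "push M f" p
    by (rule quantization)
  have "space M \<noteq> {}"
    using assms(2) by auto
  then obtain a where a: "strict_mono_on {1..k} a"
    and opt: "optimal_codebook (push M f) p k (a ` {1..k})"
    and g: "AE \<omega> in M. g \<omega> \<in> a ` {1..k} \<and> \<bar>f \<omega> - g \<omega>\<bar> = infdist (f \<omega>) (a ` {1..k})"
    by (rule Gpk_minimizer_sorted_codebook[OF refl assms(1) _ assms(5,7,8)])
  define r where "r i = (if i = 1 then afrak M f else if i = Suc k then bfrak M f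
    else ereal ((a (i - 1) + a i) / 2))" for i
  interpret optimal_quantizer "push M f" p k a r
  proof (intro optimal_quantizer.intro[OF quantization] optimal_quantizer_axioms.intro)
    show "AE x in push M f. r 1 \<le> ereal x \<and> ereal x < r (Suc k)"
      using AE_push_between_afrak_bfrak[OF assms(1) f atomless] assms(4) by (simp add: r_def)
  qed (use opt a in \<open>simp_all add: r_def\<close>)
  have "AE \<omega> in M. g \<omega> = (\<Sum>i=1..k. a i * indicator (f -` eico (r i) (r (Suc i))) \<omega>)"
    by (rule AE_eq_codebook_sum[OF push_def f g])
  moreover have ends: "r 1 = afrak M f" "r (Suc k) = bfrak M f"
    using assms(4) by (simp_all add: r_def)
  moreover have "a i = Mp p (\<lambda>x. x) (eico (r i) (r (Suc i))) (push M f)"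
    if strict: "strict_mono_on {x. afrak M f \<le> ereal x \<and> ereal x \<le> bfrak M f} (cdf_of M f)"
      and i: "i \<in> {1..k}" for i
    using codebook_pth_mean[OF i] codebook_pth_mean_unique[OF strict[unfolded ends[symmetric]
          cdf_of_eq_cdf_push] i]
    by (intro Mp_eq_unique_pth_mean[symmetric]) blast
  ultimately show ?thesis
    using strict_mono_onD[OF a] r_strict_mono cell_measure_pos codebook_pth_mean
    by (intro exI[of _ a] exI[of _ r]) (auto simp: r_def)
qed

end
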